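(* Let $f$ be a convex differentiable function that is $L$-relatively smooth with respect to $h$. Then for every $\eta\in(0,1/L]$ and all $x,y\in\operatorname{int}\operatorname{dom}h$, $$D_f(x,y)\ \ge\ \frac1\eta\, D_{h^*}\big(\nabla h(x)-\eta(\nabla f(x)-\nabla f(y)),\ \nabla h(x)\big).$$
   Context: Let $C\subseteq\mathbb{R}^d$ be a closed convex set and $h:\mathbb{R}^d\to\mathbb{R}\cup\{+\infty\}$ a function satisfying the standing assumption: $h$ is twice continuously differentiable and strictly convex on $\operatorname{int} C$, and for every $y\in\mathbb{R}^d$ the problem $\min_{x\in C} h(x)-x^\top y$ has a unique solution, which lies in $\operatorname{int} C$. $h^*(y)=\sup_x x^\top y-h(x)$ is the convex conjugate of $h$ (it is convex and differentiable on $\mathbb{R}^d$ with $\nabla h^*(\nabla h(y))=y$ for $y\in\operatorname{int}C$). For a differentiable convex function $\varphi$, $D_\varphi(x,y)=\varphi(x)-\varphi(y)-\nabla\varphi(y)^\top(x-y)$. A differentiable function $f$ is $L$-relatively smooth and $\mu$-relatively strongly convex with respect to $h$ if $\mu D_h(x,y)\le D_f(x,y)\le L D_h(x,y)$ for all $x,y\in\operatorname{int}\operatorname{dom}h$ (relative smoothness alone refers to the right inequality). *)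

theory Defs
  imports "HOL-Analysis.Analysis"
begin

definition grad :: "('a::euclidean_space \<Rightarrow> real) \<Rightarrow> 'a \<Rightarrow> 'a" where
  "grad \<phi> x = (SOME g. (\<phi> has_derivative (\<lambda>v. g \<bullet> v)) (at x))"

definition bregman :: "('a::euclidean_space \<Rightarrow> real) \<Rightarrow> 'a \<Rightarrow> 'a \<Rightarrow> real" where
  "bregman \<phi> x y = \<phi> x - \<phi> y - grad \<phi> y \<bullet> (x - y)"

definition strict_convex_on :: "'a::real_vector set \<Rightarrow> ('a \<Rightarrow> real) \<Rightarrow> bool" where
  "strict_convex_on S f \<longleftrightarrow>
     (\<forall>x\<in>S. \<forall>y\<in>S. \<forall>t::real. x \<noteq> y \<and> 0 < t \<and> t < 1 \<longrightarrow>
        f ((1 - t) *\<^sub>R x + t *\<^sub>R y) < (1 - t) * f x + t * f y)"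

text \<open>Convex conjugate of h, where h is finite exactly on its domain C (and +infinity outside).\<close>
definition fenchel_conj :: "'a::euclidean_space set \<Rightarrow> ('a \<Rightarrow> real) \<Rightarrow> 'a \<Rightarrow> real" where
  "fenchel_conj C h y = (SUP x\<in>C. x \<bullet> y - h x)"

definition standing_assumption :: "'a::euclidean_space set \<Rightarrow> ('a \<Rightarrow> real) \<Rightarrow> bool" where
  "standing_assumption C h \<longleftrightarrow>
     closed C \<and> convex C \<and>
     (\<exists>h' :: 'a \<Rightarrow> 'a. \<exists>H :: 'a \<Rightarrow> 'a \<Rightarrow>\<^sub>L 'a.
        (\<forall>x\<in>interior C. (h has_derivative (\<lambda>v. h' x \<bullet> v)) (at x)) \<and>
        (\<forall>x\<in>interior C. (h' has_derivative blinfun_apply (H x)) (at x)) \<and>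
        continuous_on (interior C) H) \<and>
     strict_convex_on (interior C) h \<and>
     (\<forall>y. \<exists>!x. x \<in> C \<and> (\<forall>z\<in>C. h x - x \<bullet> y \<le> h z - z \<bullet> y)) \<and>
     (\<forall>y x. x \<in> C \<and> (\<forall>z\<in>C. h x - x \<bullet> y \<le> h z - z \<bullet> y) \<longrightarrow> x \<in> interior C)"

definition rel_smooth :: "'a::euclidean_space set \<Rightarrow> ('a \<Rightarrow> real) \<Rightarrow> real \<Rightarrow> ('a \<Rightarrow> real) \<Rightarrow> bool" where
  "rel_smooth C h L f \<longleftrightarrow>
     (\<forall>x\<in>interior C. \<forall>y\<in>interior C. bregman f x y \<le> L * bregman h x y)"

end

theory Submission
  imports Defs
begin

text \<open>Write \<open>p = \<nabla>h(x)\<close>, \<open>d = \<nabla>f(x) - \<nabla>f(y)\<close> and let \<open>z\<close> be the maximiser defining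
  \<open>h\<^sup>*(p - \<eta> d)\<close>, so that \<open>z = \<nabla>h\<^sup>*(p - \<eta> d)\<close> while \<open>x = \<nabla>h\<^sup>*(p)\<close>. Then
  \<open>D\<^sub>h\<^sub>*(p - \<eta> d, p) = -\<eta> d\<bullet>(z - x) - D\<^sub>h(z, x)\<close>, and the three-point identity
  \<open>D\<^sub>f(x, y) = D\<^sub>f(z, y) - D\<^sub>f(z, x) + d\<bullet>(x - z)\<close> together with \<open>D\<^sub>f(z, y) \<ge> 0\<close> and
  \<open>D\<^sub>f(z, x) \<le> L D\<^sub>h(z, x) \<le> D\<^sub>h(z, x)/\<eta>\<close> gives the claim.\<close>

lemma grad_eqI:
  assumes "(\<phi> has_derivative (\<lambda>v. g \<bullet> v)) (at x)"
  shows "grad \<phi> x = g"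
proof -
  have "(\<phi> has_derivative (\<lambda>v. grad \<phi> x \<bullet> v)) (at x)"
    unfolding grad_def by (rule someI[of _ g]) (rule assms)
  then have "(\<lambda>v. grad \<phi> x \<bullet> v) = (\<lambda>v. g \<bullet> v)"
    using has_derivative_unique assms by blast
  then have "(grad \<phi> x - g) \<bullet> (grad \<phi> x - g) = 0"
    by (metis inner_diff_left right_minus_eq)
  then show ?thesis by simp
qed

lemma has_derivative_grad:
  fixes \<phi> :: "'a::euclidean_space \<Rightarrow> real"
  assumes "\<phi> differentiable (at x)"
  shows "(\<phi> has_derivative (\<lambda>v. grad \<phi> x \<bullet> v)) (at x)"
proof -
  obtain D where D: "(\<phi> has_derivative D) (at x)"
    using assms differentiable_def by blast
  have "D = (\<lambda>v. adjoint D 1 \<bullet> v)"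
    using adjoint_works[OF has_derivative_linear[OF D], of _ 1] by (simp add: inner_commute)
  with D have "(\<phi> has_derivative (\<lambda>v. adjoint D 1 \<bullet> v)) (at x)" by simp
  then show ?thesis using grad_eqI by metis
qed

lemma convex_on_has_derivative_above_tangent:
  fixes f :: "'a::real_normed_vector \<Rightarrow> real"
  assumes convex: "convex_on S f" and "x \<in> S" "z \<in> S"
    and D: "(f has_derivative D) (at x)"
  shows "f x + D (z - x) \<le> f z"
proof -
  let ?q = "\<lambda>t. (f (x + t *\<^sub>R (z - x)) - f x) / t"
  interpret D: bounded_linear D using D by (rule has_derivative_bounded_linear)
  have "((\<lambda>t::real. x + t *\<^sub>R (z - x)) has_derivative (\<lambda>t. t *\<^sub>R (z - x))) (at 0)"
    by (auto intro!: derivative_eq_intros)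
  from has_derivative_compose[OF this, of f D]
  have "((\<lambda>t. f (x + t *\<^sub>R (z - x))) has_derivative (\<lambda>t. t * D (z - x))) (at 0)"
    using D by (simp add: D.scaleR)
  then have "((\<lambda>t. f (x + t *\<^sub>R (z - x))) has_real_derivative D (z - x)) (at 0)"
    by (simp add: has_field_derivative_def mult.commute[of _ "D (z - x)"])
  then have "(?q \<longlongrightarrow> D (z - x)) (at 0)"
    unfolding DERIV_def by simp
  then have lim: "(?q \<longlongrightarrow> D (z - x)) (at_right 0)"
    by (rule tendsto_mono[OF at_le[OF subset_UNIV]])
  have ev: "\<forall>\<^sub>F t in at_right 0. ?q t \<le> f z - f x"
  proof (rule eventually_at_rightI[of 0 1])
    fix t :: real assume t: "t \<in> {0<..<1}"
    have "x + t *\<^sub>R (z - x) = (1 - t) *\<^sub>R x + t *\<^sub>R z" by (simp add: algebra_simps)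
    then have "f (x + t *\<^sub>R (z - x)) - f x \<le> t * (f z - f x)"
      using convex_onD[OF convex, of t x z] t assms(2,3) by (simp add: algebra_simps)
    then show "?q t \<le> f z - f x"
      using t by (simp add: divide_simps mult.commute)
  qed simp
  have "D (z - x) \<le> f z - f x"
    by (rule tendsto_le[OF _ tendsto_const lim ev]) simp
  then show ?thesis by simp
qed

lemma bregman_nonneg:
  fixes f :: "'a::euclidean_space \<Rightarrow> real"
  assumes "convex_on S f" "x \<in> S" "z \<in> S" "f differentiable (at x)"
  shows "0 \<le> bregman f z x"
  using convex_on_has_derivative_above_tangent[OF assms(1-3) has_derivative_grad[OF assms(4)]]
  unfolding bregman_def by simp

lemma bregman_three_point:
  "bregman f x y = bregman f z y - bregman f z x + (grad f x - grad f y) \<bullet> (x - z)"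
  unfolding bregman_def by (simp add: algebra_simps)

lemma strict_convex_on_imp_convex_on:
  assumes "strict_convex_on S f" "convex S"
  shows "convex_on S f"
proof (rule convex_onI[OF _ assms(2)])
  fix t :: real and a b assume "0 < t" "t < 1" "a \<in> S" "b \<in> S"
  then show "f ((1 - t) *\<^sub>R a + t *\<^sub>R b) \<le> (1 - t) * f a + t * f b"
    using assms(1) unfolding strict_convex_on_def
    by (cases "a = b") (auto simp: algebra_simps intro: less_imp_le)
qed

text \<open>In the paper's notation \<open>conj_argmax C h u z\<close> says \<open>z = \<nabla>h\<^sup>*(u)\<close>.\<close>

definition conj_argmax :: "'a::euclidean_space set \<Rightarrow> ('a \<Rightarrow> real) \<Rightarrow> 'a \<Rightarrow> 'a \<Rightarrow> bool" where
  "conj_argmax C h u z \<longleftrightarrow> z \<in> C \<and> (\<forall>w\<in>C. h z - z \<bullet> u \<le> h w - w \<bullet> u)"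

lemma fenchel_conj_eq_conj_argmax:
  assumes "conj_argmax C h u z"
  shows "fenchel_conj C h u = z \<bullet> u - h z"
  unfolding fenchel_conj_def
  by (rule cSup_eq_maximum) (use assms in \<open>auto simp: conj_argmax_def inner_commute\<close>)

lemma standing_assumptionD:
  assumes "standing_assumption C h"
  shows "convex C" "strict_convex_on (interior C) h"
    and "\<exists>h'. \<forall>x\<in>interior C. (h has_derivative (\<lambda>v. h' x \<bullet> v)) (at x)"
    and "\<exists>z. conj_argmax C h u z"
    and "conj_argmax C h u z \<Longrightarrow> z \<in> interior C"
  using assms unfolding standing_assumption_def conj_argmax_def by blast+

lemma standing_assumption_conj_argmax:
  assumes "standing_assumption C h"
  obtains z where "conj_argmax C h u z" "z \<in> interior C"
  using standing_assumptionD(4,5)[OF assms] by blast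

lemma standing_assumption_convex_on:
  assumes "standing_assumption C h"
  shows "convex_on (interior C) h"
  using standing_assumptionD(1,2)[OF assms] convex_interior strict_convex_on_imp_convex_on
  by blast

lemma standing_assumption_differentiable:
  assumes "standing_assumption C h" "x \<in> interior C"
  shows "h differentiable (at x)"
  using standing_assumptionD(3)[OF assms(1)] assms(2) differentiable_def by blast

lemma fenchel_conj_ge:
  assumes "standing_assumption C h" "x \<in> C"
  shows "x \<bullet> u - h x \<le> fenchel_conj C h u"
proof -
  obtain z where z: "conj_argmax C h u z"
    using assms(1) by (rule standing_assumption_conj_argmax)
  then have "h z - z \<bullet> u \<le> h x - x \<bullet> u"
    using assms(2) unfolding conj_argmax_def by blast
  then show ?thesis
    using fenchel_conj_eq_conj_argmax[OF z] by linarith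
qed

text \<open>A point \<open>x\<close> of the interior is the maximiser at \<open>\<nabla>h(x)\<close>: compare \<open>x\<close> with the
  maximiser, which lies in the interior, through the tangent inequality of \<open>h\<close> at \<open>x\<close>.\<close>

lemma conj_argmax_grad:
  assumes SA: "standing_assumption C h" and x: "x \<in> interior C"
  shows "conj_argmax C h (grad h x) x"
proof -
  obtain z where z: "conj_argmax C h (grad h x) z" "z \<in> interior C"
    using SA by (rule standing_assumption_conj_argmax)
  have "0 \<le> bregman h z x"
    using bregman_nonneg[OF standing_assumption_convex_on[OF SA] x z(2)]
      standing_assumption_differentiable[OF SA x] by blast
  then have "h x - x \<bullet> grad h x \<le> h z - z \<bullet> grad h x"
    unfolding bregman_def by (simp add: inner_diff_right inner_commute)
  moreover have "\<forall>w\<in>C. h z - z \<bullet> grad h x \<le> h w - w \<bullet> grad h x"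
    using z(1) unfolding conj_argmax_def by blast
  ultimately show ?thesis
    using subsetD[OF interior_subset x] unfolding conj_argmax_def by fastforce
qed

text \<open>At \<open>\<nabla>h(x)\<close> the function \<open>u \<mapsto> h\<^sup>*(u) - x\<bullet>u\<close> attains its minimum \<open>-h(x)\<close>.\<close>

lemma grad_fenchel_conj:
  assumes SA: "standing_assumption C h" and x: "x \<in> interior C"
    and diff: "fenchel_conj C h differentiable (at (grad h x))"
  shows "grad (fenchel_conj C h) (grad h x) = x"
proof -
  let ?M = "fenchel_conj C h" and ?p = "grad h x"
  have M: "(?M has_derivative (\<lambda>v. grad ?M ?p \<bullet> v)) (at ?p)"
    using diff by (rule has_derivative_grad)
  have Mp: "?M ?p = x \<bullet> ?p - h x"
    using conj_argmax_grad[OF SA x] by (rule fenchel_conj_eq_conj_argmax)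
  have "(\<lambda>v. grad ?M ?p \<bullet> v - x \<bullet> v) = (\<lambda>v. 0)"
  proof (rule has_derivative_local_min)
    show "((\<lambda>u. ?M u - x \<bullet> u) has_derivative (\<lambda>v. grad ?M ?p \<bullet> v - x \<bullet> v)) (at ?p)"
      using M by (auto intro!: derivative_eq_intros)
    show "\<forall>\<^sub>F u in at ?p. ?M ?p - x \<bullet> ?p \<le> ?M u - x \<bullet> u"
    proof (intro always_eventually allI)
      fix u
      show "?M ?p - x \<bullet> ?p \<le> ?M u - x \<bullet> u"
        using fenchel_conj_ge[OF SA subsetD[OF interior_subset x], of u] Mp by linarith
    qed
  qed
  then have "(grad ?M ?p - x) \<bullet> (grad ?M ?p - x) = 0"
    by (metis inner_diff_left)
  then show ?thesis by simp
qed

lemma bregman_fenchel_conj: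
  assumes SA: "standing_assumption C h" and x: "x \<in> interior C"
    and diff: "fenchel_conj C h differentiable (at (grad h x))"
    and z: "conj_argmax C h u z"
  shows "bregman (fenchel_conj C h) u (grad h x) = (u - grad h x) \<bullet> (z - x) - bregman h z x"
  unfolding bregman_def grad_fenchel_conj[OF SA x diff]
    fenchel_conj_eq_conj_argmax[OF z] fenchel_conj_eq_conj_argmax[OF conj_argmax_grad[OF SA x]]
  by (simp add: algebra_simps inner_commute)

theorem lemma3:
  fixes C :: "'a::euclidean_space set" and h f :: "'a \<Rightarrow> real" and L \<eta> :: real
  assumes SA: "standing_assumption C h"
    and conj_diff: "\<forall>u. fenchel_conj C h differentiable (at u)"
    and f_convex: "convex_on (interior C) f"
    and f_diff: "\<forall>x\<in>interior C. f differentiable (at x)"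
    and f_smooth: "rel_smooth C h L f"
    and eta: "0 < \<eta>" "\<eta> \<le> 1 / L"
    and x: "x \<in> interior C" and y: "y \<in> interior C"
  shows "bregman f x y \<ge>
           (1 / \<eta>) * bregman (fenchel_conj C h)
              (grad h x - \<eta> *\<^sub>R (grad f x - grad f y)) (grad h x)"
proof -
  define d where "d = grad f x - grad f y"
  obtain z where z: "conj_argmax C h (grad h x - \<eta> *\<^sub>R d) z" "z \<in> interior C"
    using SA by (rule standing_assumption_conj_argmax)
  have dual: "(1 / \<eta>) * bregman (fenchel_conj C h) (grad h x - \<eta> *\<^sub>R d) (grad h x)
      = d \<bullet> (x - z) - (1 / \<eta>) * bregman h z x"
    using bregman_fenchel_conj[OF SA x spec[OF conj_diff] z(1)] eta(1)
    by (simp add: field_simps inner_diff_right)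
  have "0 \<le> bregman f z y"
    using bregman_nonneg f_convex y z(2) f_diff by blast
  moreover have "bregman f z x \<le> L * bregman h z x"
    using f_smooth z(2) x unfolding rel_smooth_def by blast
  moreover have "L * bregman h z x \<le> (1 / \<eta>) * bregman h z x"
  proof (rule mult_right_mono)
    show "L \<le> 1 / \<eta>"
    proof -
      have "0 < 1 / L"
        using eta by linarith
      then have "0 < L" by simp
      then show ?thesis using eta by (simp add: field_simps)
    qed
    show "0 \<le> bregman h z x"
      using bregman_nonneg standing_assumption_convex_on[OF SA] x z(2)
        standing_assumption_differentiable[OF SA x] by blast
  qed
  ultimately show ?thesis
    using bregman_three_point[of f x y z] dual unfolding d_def by linarith
qed

end
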